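(* For every $\omega>0$, every eigenvalue $\eta$ of the preconditioned matrix $\mathcal F_\omega^{-1}\mathcal R$ satisfies $$|\eta-1|\le\sigma(\omega),$$ where $\sigma(\omega)<1$. That is, all eigenvalues lie in the closed disk of radius $\sigma(\omega)$ centered at $1$.
   Context: Let $M\ge 1$ be an integer and let $I$ denote an identity matrix of the appropriate size. Let $T\in\mathbb R^{M\times M}$ be real symmetric positive definite, with spectrum $\lambda(T)$. Let $D\in\mathbb R^{M\times M}$ be diagonal with nonnegative diagonal entries. Define the block matrices in $\mathbb R^{2M\times 2M}$: $$\mathcal R=\begin{bmatrix} I & T-D\\ D-T & I\end{bmatrix},\qquad \mathcal T=\begin{bmatrix} I & T\\ -T & I\end{bmatrix},\qquad \mathcal D=\begin{bmatrix} 0 & -D\\ D & 0\end{bmatrix}.$$ Thus $\mathcal R=\mathcal T+\mathcal D$. For $\omega>0$, the NASS preconditioner is $$\mathcal F_\omega=\tfrac{1}{2\omega}(\omega I+\mathcal T)(\omega I+\mathcal D).$$ Also define $$\sigma(\omega)=\max_{\lambda\in\lambda(T)}\sqrt{\frac{(\omega-1)^2+\lambda^2}{(\omega+1)^2+\lambda^2}} .$$ *)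

theory Defs
  imports "Jordan_Normal_Form.Matrix" "Jordan_Normal_Form.Char_Poly"
begin

definition sym_pos_def_mat :: "nat \<Rightarrow> real mat \<Rightarrow> bool" where
  "sym_pos_def_mat n T \<longleftrightarrow> T \<in> carrier_mat n n \<and> transpose_mat T = T \<and>
     (\<forall>v \<in> carrier_vec n. v \<noteq> 0\<^sub>v n \<longrightarrow> v \<bullet> (T *\<^sub>v v) > 0)"

(* the inverse of a square matrix (meaningful when it is invertible) *)
definition mat_inv :: "nat \<Rightarrow> real mat \<Rightarrow> real mat" where
  "mat_inv n A = (SOME B. B \<in> carrier_mat n n \<and> A * B = 1\<^sub>m n \<and> B * A = 1\<^sub>m n)"

definition spectrum_real :: "real mat \<Rightarrow> real set" where
  "spectrum_real T = {l. eigenvalue T l}"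

definition blkR :: "nat \<Rightarrow> real mat \<Rightarrow> real mat \<Rightarrow> real mat" where
  "blkR M T D = four_block_mat (1\<^sub>m M) (T - D) (D - T) (1\<^sub>m M)"

definition blkT :: "nat \<Rightarrow> real mat \<Rightarrow> real mat" where
  "blkT M T = four_block_mat (1\<^sub>m M) T (- T) (1\<^sub>m M)"

definition blkD :: "nat \<Rightarrow> real mat \<Rightarrow> real mat" where
  "blkD M D = four_block_mat (0\<^sub>m M M) (- D) D (0\<^sub>m M M)"

definition NASS :: "nat \<Rightarrow> real mat \<Rightarrow> real mat \<Rightarrow> real \<Rightarrow> real mat" where
  "NASS M T D \<omega> = (1 / (2 * \<omega>)) \<cdot>\<^sub>m
     ((\<omega> \<cdot>\<^sub>m 1\<^sub>m (2*M) + blkT M T) * (\<omega> \<cdot>\<^sub>m 1\<^sub>m (2*M) + blkD M D))"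

definition sigma :: "real mat \<Rightarrow> real \<Rightarrow> real" where
  "sigma T \<omega> = Max ((\<lambda>l. sqrt (((\<omega> - 1)^2 + l^2) / ((\<omega> + 1)^2 + l^2))) ` spectrum_real T)"

end

theory Submission
  imports Defs "HOL-Analysis.Function_Topology"
begin

text \<open>Write \<open>\<T> = I + S\<close> with \<open>S = [0, T; -T, 0]\<close>. Both \<open>S\<close> and \<open>\<D>\<close> are skew-symmetric. With \<open>Q = (\<omega> + 1) I + S\<close>,
  \<open>P = (\<omega> - 1) I - S\<close> and \<open>D\<^sub>\<plusminus> = \<omega> I \<plusminus> \<D>\<close> one has \<open>2 \<omega> \<R> = Q D\<^sub>+ - P D\<^sub>-\<close>, so an eigenpair
  \<open>\<R> v = \<eta> \<F>\<^sub>\<omega> v\<close> gives \<open>P D\<^sub>- v = (1 - \<eta>) Q D\<^sub>+ v\<close>. For skew \<open>K\<close> one has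
  \<open>\<parallel>(a I + b K) x\<parallel>\<^sup>2 = a\<^sup>2 \<parallel>x\<parallel>\<^sup>2 + b\<^sup>2 \<parallel>K x\<parallel>\<^sup>2\<close>; hence \<open>\<parallel>D\<^sub>+ v\<parallel> = \<parallel>D\<^sub>- v\<parallel>\<close>, and since \<open>P\<close>
  and \<open>Q\<close> commute, \<open>c = Q\<^sup>-\<^sup>1 D\<^sub>- v\<close> satisfies \<open>P c = (1 - \<eta>) D\<^sub>+ v\<close>, so
  \<open>|1 - \<eta>|\<^sup>2 = ((\<omega> - 1)\<^sup>2 \<parallel>c\<parallel>\<^sup>2 + \<parallel>S c\<parallel>\<^sup>2) / ((\<omega> + 1)\<^sup>2 \<parallel>c\<parallel>\<^sup>2 + \<parallel>S c\<parallel>\<^sup>2)\<close>. This ratio grows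
  with \<open>\<parallel>S c\<parallel>\<^sup>2 / \<parallel>c\<parallel>\<^sup>2\<close>, which is at most \<open>\<lambda>\<^sup>2\<close> for an eigenvalue \<open>\<lambda>\<close> of \<open>T\<close> of largest
  modulus; such a \<open>\<lambda>\<close> comes from maximising \<open>\<parallel>T q\<parallel>\<close> on the (compact) unit sphere.\<close>

section \<open>A norm bound for real symmetric matrices\<close>

lemma real_vec_sq_expand:
  fixes u w :: "real Matrix.vec"
  assumes "u \<in> carrier_vec n" "w \<in> carrier_vec n"
  shows "(a \<cdot>\<^sub>v u + b \<cdot>\<^sub>v w) \<bullet> (a \<cdot>\<^sub>v u + b \<cdot>\<^sub>v w) = a\<^sup>2 * (u \<bullet> u) + 2 * a * b * (u \<bullet> w) + b\<^sup>2 * (w \<bullet> w)"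
  using assms
  by (simp add: add_scalar_prod_distrib[of _ n] scalar_prod_add_distrib[of _ n]
      comm_scalar_prod[of w n u] power2_eq_square algebra_simps)

lemma real_vec_sq_nonneg: "(u :: real Matrix.vec) \<bullet> u \<ge> 0"
  unfolding scalar_prod_def by (intro sum_nonneg) auto

lemma real_vec_sq_eq_0_iff: "(u :: real Matrix.vec) \<in> carrier_vec n \<Longrightarrow> u \<bullet> u = 0 \<longleftrightarrow> u = 0\<^sub>v n"
  using conjugate_square_eq_0_vec[of u n] by simp

lemma real_vec_component_sq_le: "i < dim_vec u \<Longrightarrow> (u $ i)\<^sup>2 \<le> (u :: real Matrix.vec) \<bullet> u"
  unfolding scalar_prod_def power2_eq_square
  by (rule member_le_sum[where f = "\<lambda>j. u $ j * u $ j"]) auto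

lemma scalar_prod_vec: "vec n f \<bullet> vec n g = (\<Sum>i<n. f i * g i)"
  by (simp add: scalar_prod_def lessThan_atLeast0)

lemma mult_mat_vec_vec:
  "T \<in> carrier_mat m n \<Longrightarrow> T *\<^sub>v vec n f = vec m (\<lambda>i. \<Sum>j<n. T $$ (i, j) * f j)"
  by (intro eq_vecI) (auto simp: scalar_prod_def lessThan_atLeast0 intro!: sum.cong)

lemma compact_unit_sphere_coords:
  "compact (PiE UNIV (\<lambda>i. if i < n then {-1..1} else {0::real}) \<inter> {f. vec n f \<bullet> vec n f = 1})"
proof -
  have "compactin (product_topology (\<lambda>_. euclidean) UNIV)
          (PiE UNIV (\<lambda>i. if i < n then {-1..1} else {0::real}))"
    by (subst compactin_PiE) (auto simp: compactin_euclidean_iff)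
  then have "compact (PiE UNIV (\<lambda>i. if i < n then {-1..1} else {0::real}))"
    by (simp add: euclidean_product_topology)
  moreover have "continuous_on UNIV (\<lambda>f :: nat \<Rightarrow> real. \<Sum>i<n. f i * f i)"
    by (intro continuous_intros continuous_on_product_coordinates)
  ultimately show ?thesis
    unfolding scalar_prod_vec by (intro compact_Int_closed closed_Collect_eq) auto
qed

lemma mat_vec_sq_le_if_le_on_unit_vecs:
  fixes T :: "real mat"
  assumes T: "T \<in> carrier_mat m n"
    and unit: "\<And>u. u \<in> carrier_vec n \<Longrightarrow> u \<bullet> u = 1 \<Longrightarrow> (T *\<^sub>v u) \<bullet> (T *\<^sub>v u) \<le> L"
    and q: "q \<in> carrier_vec n"
  shows "(T *\<^sub>v q) \<bullet> (T *\<^sub>v q) \<le> L * (q \<bullet> q)"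
proof (cases "q = 0\<^sub>v n")
  case True
  have "T *\<^sub>v 0\<^sub>v n = 0\<^sub>v m" using T by (intro eq_vecI) auto
  with True show ?thesis by simp
next
  case False
  define r where "r = sqrt (q \<bullet> q)"
  have r: "r > 0" "r\<^sup>2 = q \<bullet> q"
    using False real_vec_sq_eq_0_iff[OF q] real_vec_sq_nonneg[of q] by (auto simp: r_def)
  then have "q \<bullet> q > 0" by (metis zero_less_power2 less_irrefl)
  have "((T *\<^sub>v q) \<bullet> (T *\<^sub>v q)) / (q \<bullet> q) = (T *\<^sub>v ((1 / r) \<cdot>\<^sub>v q)) \<bullet> (T *\<^sub>v ((1 / r) \<cdot>\<^sub>v q))"
    using T q r by (simp add: mult_mat_vec power2_eq_square)
  also have "\<dots> \<le> L" using q r by (intro unit) (auto simp: power2_eq_square)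
  finally show ?thesis using \<open>q \<bullet> q > 0\<close> by (simp add: divide_le_eq mult.commute)
qed

lemma mat_vec_norm_ratio_attains_max:
  fixes T :: "real mat"
  assumes T: "T \<in> carrier_mat m n" and n: "n > 0"
  obtains p where "p \<in> carrier_vec n" "p \<bullet> p = 1"
    "\<And>q. q \<in> carrier_vec n \<Longrightarrow> (T *\<^sub>v q) \<bullet> (T *\<^sub>v q) \<le> ((T *\<^sub>v p) \<bullet> (T *\<^sub>v p)) * (q \<bullet> q)"
proof -
  define S where "S = PiE UNIV (\<lambda>i. if i < n then {-1..1} else {0::real}) \<inter> {f. vec n f \<bullet> vec n f = 1}"
  define g where "g f = (T *\<^sub>v vec n f) \<bullet> (T *\<^sub>v vec n f)" for f
  have "continuous_on S g"
    unfolding g_def mult_mat_vec_vec[OF T] scalar_prod_vec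
    by (intro continuous_intros continuous_on_subset[OF continuous_on_product_coordinates]) auto
  moreover have "(\<lambda>i. if i = 0 then 1 else 0) \<in> S"
    using n by (auto simp: S_def scalar_prod_vec PiE_def extensional_def if_distrib cong: if_cong)
  ultimately obtain f0 where f0: "f0 \<in> S" and f0_max: "\<And>f. f \<in> S \<Longrightarrow> g f \<le> g f0"
    using continuous_attains_sup[OF compact_unit_sphere_coords[of n, folded S_def]] by blast
  define p where "p = vec n f0"
  have p: "p \<in> carrier_vec n" "p \<bullet> p = 1" using f0 by (auto simp: p_def S_def)
  have "(T *\<^sub>v u) \<bullet> (T *\<^sub>v u) \<le> (T *\<^sub>v p) \<bullet> (T *\<^sub>v p)" if u: "u \<in> carrier_vec n" "u \<bullet> u = 1" for u
  proof -
    define f where "f i = (if i < n then u $ i else 0)" for i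
    have vf: "vec n f = u" using u by (auto simp: f_def)
    have "\<bar>u $ i\<bar> \<le> 1" if "i < n" for i
      using real_vec_component_sq_le[of i u] u that abs_le_square_iff[of "u $ i" 1] by simp
    then have "f \<in> S" using u by (auto simp: S_def vf abs_le_iff) (auto simp: f_def)
    then show ?thesis using f0_max[of f] unfolding g_def vf p_def by simp
  qed
  with p T that show ?thesis by (blast intro: mat_vec_sq_le_if_le_on_unit_vecs)
qed

lemma linear_coeff_zero_if_quadratic_nonneg:
  fixes b c :: real
  assumes nonneg: "\<And>t. 0 \<le> 2 * t * b + t\<^sup>2 * c"
  shows "b = 0"
proof (rule ccontr)
  assume "b \<noteq> 0"
  define k where "k = \<bar>c\<bar> + 1"
  have k: "k > 0" "c \<le> k" by (auto simp: k_def)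
  have "2 * (- b / k) * b + (- b / k)\<^sup>2 * c = b\<^sup>2 * (c / k - 2) / k"
    using k by (simp add: power2_eq_square field_simps)
  also have "\<dots> < 0"
  proof -
    have "c / k \<le> 1" using k by (simp add: divide_le_eq)
    then have "c / k - 2 < 0" by linarith
    then show ?thesis using k \<open>b \<noteq> 0\<close> by (simp add: mult_pos_neg divide_neg_pos)
  qed
  finally show False using nonneg[of "- b / k"] by linarith
qed

lemma sym_mat_sq_eigen_if_norm_ratio_max:
  fixes T :: "real mat"
  assumes T: "T \<in> carrier_mat n n" "transpose_mat T = T" and p: "p \<in> carrier_vec n"
    and bound: "\<And>q. q \<in> carrier_vec n \<Longrightarrow> (T *\<^sub>v q) \<bullet> (T *\<^sub>v q) \<le> L * (q \<bullet> q)"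
    and attained: "(T *\<^sub>v p) \<bullet> (T *\<^sub>v p) = L * (p \<bullet> p)"
  shows "T *\<^sub>v (T *\<^sub>v p) = L \<cdot>\<^sub>v p"
proof -
  define h where "h = L \<cdot>\<^sub>v p - T *\<^sub>v (T *\<^sub>v p)"
  have h: "h \<in> carrier_vec n" using T p by (simp add: h_def)
  have Tp: "T *\<^sub>v p \<in> carrier_vec n" and Th: "T *\<^sub>v h \<in> carrier_vec n" using T p h by auto
  have "0 \<le> 2 * t * (L * (p \<bullet> h) - (T *\<^sub>v p) \<bullet> (T *\<^sub>v h)) + t\<^sup>2 * (L * (h \<bullet> h) - (T *\<^sub>v h) \<bullet> (T *\<^sub>v h))"
    for t
  proof -
    have "T *\<^sub>v (p + t \<cdot>\<^sub>v h) = T *\<^sub>v p + t \<cdot>\<^sub>v (T *\<^sub>v h)"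
      using T p h by (simp add: mult_add_distrib_mat_vec[of T n n] mult_mat_vec)
    moreover have "(p + t \<cdot>\<^sub>v h) \<bullet> (p + t \<cdot>\<^sub>v h) = p \<bullet> p + 2 * t * (p \<bullet> h) + t\<^sup>2 * (h \<bullet> h)"
      using real_vec_sq_expand[OF p h, of 1 t] by simp
    moreover have "(T *\<^sub>v p + t \<cdot>\<^sub>v (T *\<^sub>v h)) \<bullet> (T *\<^sub>v p + t \<cdot>\<^sub>v (T *\<^sub>v h))
        = (T *\<^sub>v p) \<bullet> (T *\<^sub>v p) + 2 * t * ((T *\<^sub>v p) \<bullet> (T *\<^sub>v h)) + t\<^sup>2 * ((T *\<^sub>v h) \<bullet> (T *\<^sub>v h))"
      using real_vec_sq_expand[OF Tp Th, of 1 t] by simp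
    ultimately show ?thesis
      using bound[of "p + t \<cdot>\<^sub>v h"] attained p h by (simp add: algebra_simps)
  qed
  then have "L * (p \<bullet> h) - (T *\<^sub>v p) \<bullet> (T *\<^sub>v h) = 0"
    by (rule linear_coeff_zero_if_quadratic_nonneg)
  moreover have "(T *\<^sub>v p) \<bullet> (T *\<^sub>v h) = (T *\<^sub>v (T *\<^sub>v p)) \<bullet> h"
    using transpose_vec_mult_scalar[OF T(1) h Tp] T(2) by simp
  ultimately have "h \<bullet> h = 0"
    using p h T by (simp add: h_def minus_scalar_prod_distrib[of _ n])
  then have h0: "h = 0\<^sub>v n" using real_vec_sq_eq_0_iff[OF h] by simp
  show ?thesis
  proof (rule eq_vecI)
    fix i assume "i < dim_vec (L \<cdot>\<^sub>v p)"
    then have "i < n" using p by simp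
    then show "(T *\<^sub>v (T *\<^sub>v p)) $ i = (L \<cdot>\<^sub>v p) $ i"
      using arg_cong[OF h0, of "\<lambda>x. x $ i"] T p by (simp add: h_def)
  qed (use T p in simp)
qed

lemma eigenvalue_sqrt_if_sq_eigenvector:
  fixes T :: "real mat"
  assumes T: "T \<in> carrier_mat n n" and p: "p \<in> carrier_vec n" "p \<noteq> 0\<^sub>v n"
    and sq: "T *\<^sub>v (T *\<^sub>v p) = L \<cdot>\<^sub>v p" and L: "L \<ge> 0"
  obtains l where "eigenvalue T l" "l\<^sup>2 = L"
proof -
  define s where "s = sqrt L"
  have s: "s\<^sup>2 = L" using L by (simp add: s_def)
  define y where "y = T *\<^sub>v p + s \<cdot>\<^sub>v p"
  have y: "y \<in> carrier_vec n" using T p by (simp add: y_def)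
  show ?thesis
  proof (cases "y = 0\<^sub>v n")
    case True
    have "T *\<^sub>v p = (- s) \<cdot>\<^sub>v p"
    proof (rule eq_vecI)
      fix i assume "i < dim_vec ((- s) \<cdot>\<^sub>v p)"
      then show "(T *\<^sub>v p) $ i = ((- s) \<cdot>\<^sub>v p) $ i"
        using arg_cong[OF True, of "\<lambda>x. x $ i"] T p by (simp add: y_def)
    qed (use T p in simp)
    then have "eigenvalue T (- s)"
      using T p unfolding eigenvalue_def eigenvector_def by auto
    then show ?thesis using that s by simp
  next
    case False
    have "T *\<^sub>v y = T *\<^sub>v (T *\<^sub>v p) + s \<cdot>\<^sub>v (T *\<^sub>v p)"
      using T p by (simp add: y_def mult_add_distrib_mat_vec[of T n n] mult_mat_vec)
    also have "\<dots> = s \<cdot>\<^sub>v y"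
      using T p s sq by (intro eq_vecI) (auto simp: y_def power2_eq_square algebra_simps)
    finally have "eigenvalue T s"
      using T y False unfolding eigenvalue_def eigenvector_def by auto
    then show ?thesis using that s by simp
  qed
qed

lemma sym_mat_norm_bound_by_eigenvalue:
  fixes T :: "real mat"
  assumes T: "T \<in> carrier_mat n n" "transpose_mat T = T" and n: "n > 0"
  obtains l where "eigenvalue T l"
    "\<And>x. x \<in> carrier_vec n \<Longrightarrow> (T *\<^sub>v x) \<bullet> (T *\<^sub>v x) \<le> l\<^sup>2 * (x \<bullet> x)"
proof -
  obtain p where p: "p \<in> carrier_vec n" "p \<bullet> p = 1"
    and max: "\<And>q. q \<in> carrier_vec n \<Longrightarrow> (T *\<^sub>v q) \<bullet> (T *\<^sub>v q) \<le> ((T *\<^sub>v p) \<bullet> (T *\<^sub>v p)) * (q \<bullet> q)"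
    using mat_vec_norm_ratio_attains_max[OF T(1) n] by blast
  define L where "L = (T *\<^sub>v p) \<bullet> (T *\<^sub>v p)"
  have "T *\<^sub>v (T *\<^sub>v p) = L \<cdot>\<^sub>v p"
    using max p by (intro sym_mat_sq_eigen_if_norm_ratio_max[OF T p(1)]) (auto simp: L_def)
  moreover have "p \<noteq> 0\<^sub>v n" using p by auto
  moreover have "L \<ge> 0" by (simp add: L_def real_vec_sq_nonneg)
  ultimately obtain l where "eigenvalue T l" "l\<^sup>2 = L"
    using eigenvalue_sqrt_if_sq_eigenvector[OF T(1) p(1)] by blast
  with that max show ?thesis by (simp add: L_def)
qed

section \<open>Skew-symmetric real matrices acting on complex vectors\<close>

lemma scalar_prod_mult_skew_mat:
  fixes A :: "real mat"
  assumes A: "A \<in> carrier_mat n n" "transpose_mat A = - A" and u: "u \<in> carrier_vec n"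
  shows "u \<bullet> (A *\<^sub>v u) = 0"
proof -
  have "u \<bullet> (A *\<^sub>v u) = (transpose_mat A *\<^sub>v u) \<bullet> u"
    using transpose_vec_mult_scalar[OF A(1) u u] by simp
  also have "\<dots> = - (u \<bullet> (A *\<^sub>v u))"
    using A u by (simp add: comm_scalar_prod[of _ n u])
  finally show ?thesis by simp
qed

abbreviation cmat :: "real mat \<Rightarrow> complex mat" where
  "cmat A \<equiv> map_mat complex_of_real A"

definition sqnorm :: "complex Matrix.vec \<Rightarrow> real" where
  "sqnorm x = (\<Sum>i<dim_vec x. (cmod (x $ i))\<^sup>2)"

lemma sqnorm_Re_Im: "sqnorm x = map_vec Re x \<bullet> map_vec Re x + map_vec Im x \<bullet> map_vec Im x"
  unfolding sqnorm_def cmod_power2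
  by (simp add: scalar_prod_def power2_eq_square sum.distrib lessThan_atLeast0)

lemma Re_cmat_mult_vec:
  "A \<in> carrier_mat n m \<Longrightarrow> x \<in> carrier_vec m \<Longrightarrow> map_vec Re (cmat A *\<^sub>v x) = A *\<^sub>v map_vec Re x"
  by (intro eq_vecI) (auto simp: scalar_prod_def Re_sum)

lemma Im_cmat_mult_vec:
  "A \<in> carrier_mat n m \<Longrightarrow> x \<in> carrier_vec m \<Longrightarrow> map_vec Im (cmat A *\<^sub>v x) = A *\<^sub>v map_vec Im x"
  by (intro eq_vecI) (auto simp: scalar_prod_def Im_sum)

lemma sqnorm_nonneg: "sqnorm x \<ge> 0"
  unfolding sqnorm_def by (intro sum_nonneg) auto

lemma sqnorm_eq_0_iff:
  assumes "x \<in> carrier_vec n"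
  shows "sqnorm x = 0 \<longleftrightarrow> x = 0\<^sub>v n"
proof
  assume "sqnorm x = 0"
  then have "\<forall>i<dim_vec x. (cmod (x $ i))\<^sup>2 = 0"
    unfolding sqnorm_def by (subst (asm) sum_nonneg_eq_0_iff) auto
  then show "x = 0\<^sub>v n" using assms by (intro eq_vecI) auto
qed (simp add: sqnorm_def)

lemma sqnorm_smult: "sqnorm (c \<cdot>\<^sub>v x) = (cmod c)\<^sup>2 * sqnorm x"
  unfolding sqnorm_def by (simp add: norm_mult power_mult_distrib sum_distrib_left)

lemma map_vec_append: "map_vec f (u @\<^sub>v w) = map_vec f u @\<^sub>v map_vec f w"
  by (intro eq_vecI) auto

lemma sqnorm_append: "sqnorm (u @\<^sub>v w) = sqnorm u + sqnorm w"
  by (simp add: sqnorm_Re_Im map_vec_append scalar_prod_append[of _ "dim_vec u" _ "dim_vec w"])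

lemma sqnorm_cmat_mult_vec_le:
  fixes A :: "real mat"
  assumes A: "A \<in> carrier_mat n n"
    and bound: "\<And>u. u \<in> carrier_vec n \<Longrightarrow> (A *\<^sub>v u) \<bullet> (A *\<^sub>v u) \<le> c * (u \<bullet> u)"
    and x: "x \<in> carrier_vec n"
  shows "sqnorm (cmat A *\<^sub>v x) \<le> c * sqnorm x"
  using bound[of "map_vec Re x"] bound[of "map_vec Im x"] x
  by (simp add: sqnorm_Re_Im Re_cmat_mult_vec[OF A] Im_cmat_mult_vec[OF A] distrib_left)

lemma transpose_skew_block_mat:
  fixes X :: "'a :: ring mat"
  assumes X: "X \<in> carrier_mat n n" "transpose_mat X = X"
  shows "transpose_mat (four_block_mat (0\<^sub>m n n) X (- X) (0\<^sub>m n n)) = - four_block_mat (0\<^sub>m n n) X (- X) (0\<^sub>m n n)"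
proof -
  have "X $$ (i, j) = X $$ (j, i)" if "i < n" "j < n" for i j
    using arg_cong[OF X(2), of "\<lambda>Y. Y $$ (j, i)"] X(1) that by simp
  then show ?thesis using X(1) by (intro eq_matI) auto
qed

lemma sqnorm_skew_block_mult_vec_le:
  fixes X :: "real mat"
  assumes X: "X \<in> carrier_mat n n"
    and bound: "\<And>y. y \<in> carrier_vec n \<Longrightarrow> sqnorm (cmat X *\<^sub>v y) \<le> c * sqnorm y"
    and x: "x \<in> carrier_vec (n + n)"
  shows "sqnorm (cmat (four_block_mat (0\<^sub>m n n) X (- X) (0\<^sub>m n n)) *\<^sub>v x) \<le> c * sqnorm x"
proof -
  define x1 x2 where "x1 = vec_first x n" and "x2 = vec_last x n"
  have x12: "x = x1 @\<^sub>v x2" "x1 \<in> carrier_vec n" "x2 \<in> carrier_vec n"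
    using x by (auto simp: x1_def x2_def)
  have "cmat (four_block_mat (0\<^sub>m n n) X (- X) (0\<^sub>m n n))
      = four_block_mat (0\<^sub>m n n) (cmat X) (- cmat X) (0\<^sub>m n n)"
    using X by (intro eq_matI) auto
  moreover have "0\<^sub>m n n *\<^sub>v y = 0\<^sub>v n" if "y \<in> carrier_vec n" for y :: "complex Matrix.vec"
    using that by (intro eq_vecI) auto
  ultimately have "cmat (four_block_mat (0\<^sub>m n n) X (- X) (0\<^sub>m n n)) *\<^sub>v x
      = (cmat X *\<^sub>v x2) @\<^sub>v (- (cmat X *\<^sub>v x1))"
    using X x12 by (simp add: four_block_mat_mult_vec[of _ n n _ n _ n])
  moreover have "sqnorm (- y) = sqnorm y" for y by (simp add: sqnorm_def)
  ultimately show ?thesis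
    using bound[OF x12(2)] bound[OF x12(3)] by (simp add: x12(1) sqnorm_append algebra_simps)
qed

definition pencil :: "real mat \<Rightarrow> real \<Rightarrow> real \<Rightarrow> complex Matrix.vec \<Rightarrow> complex Matrix.vec" where
  "pencil A a b x = of_real a \<cdot>\<^sub>v x + of_real b \<cdot>\<^sub>v (cmat A *\<^sub>v x)"

lemma dim_vec_pencil[simp]: "dim_vec (pencil A a b x) = dim_row A"
  by (simp add: pencil_def)

lemma pencil_carrier[simp]:
  "A \<in> carrier_mat n n \<Longrightarrow> x \<in> carrier_vec n \<Longrightarrow> pencil A a b x \<in> carrier_vec n"
  by (simp add: pencil_def)

lemma cmat_mult_vec_pencil:
  assumes A: "A \<in> carrier_mat n n" and x: "x \<in> carrier_vec n"
  shows "cmat (a \<cdot>\<^sub>m 1\<^sub>m n + b \<cdot>\<^sub>m A) *\<^sub>v x = pencil A a b x"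
proof (rule eq_vecI)
  fix i assume "i < dim_vec (pencil A a b x)"
  then have i: "i < n" using A x by simp
  have "(cmat (a \<cdot>\<^sub>m 1\<^sub>m n + b \<cdot>\<^sub>m A) *\<^sub>v x) $ i
      = (\<Sum>j\<in>{0..<n}. (if i = j then of_real a * x $ j else 0) + of_real b * (of_real (A $$ (i, j)) * x $ j))"
    using A x i by (auto simp: scalar_prod_def algebra_simps intro!: sum.cong)
  also have "\<dots> = pencil A a b x $ i"
    using A x i by (simp add: pencil_def sum.distrib scalar_prod_def sum_distrib_left)
  finally show "(cmat (a \<cdot>\<^sub>m 1\<^sub>m n + b \<cdot>\<^sub>m A) *\<^sub>v x) $ i = pencil A a b x $ i" .
qed (use A x in simp)

lemma sqnorm_pencil_skew:
  fixes A :: "real mat"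
  assumes A: "A \<in> carrier_mat n n" "transpose_mat A = - A" and x: "x \<in> carrier_vec n"
  shows "sqnorm (pencil A a b x) = a\<^sup>2 * sqnorm x + b\<^sup>2 * sqnorm (cmat A *\<^sub>v x)"
proof -
  have Re: "map_vec Re (pencil A a b x) = a \<cdot>\<^sub>v map_vec Re x + b \<cdot>\<^sub>v (A *\<^sub>v map_vec Re x)"
    and Im: "map_vec Im (pencil A a b x) = a \<cdot>\<^sub>v map_vec Im x + b \<cdot>\<^sub>v (A *\<^sub>v map_vec Im x)"
    using A x by (auto intro!: eq_vecI simp: pencil_def scalar_prod_def Re_sum Im_sum)
  have "map_vec Re x \<in> carrier_vec n" "map_vec Im x \<in> carrier_vec n" using x by auto
  then show ?thesis
    unfolding sqnorm_Re_Im Re Im Re_cmat_mult_vec[OF A(1) x] Im_cmat_mult_vec[OF A(1) x]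
    using A by (simp add: real_vec_sq_expand[of _ n] scalar_prod_mult_skew_mat algebra_simps)
qed

lemma sqnorm_pencil_skew_ge:
  assumes "A \<in> carrier_mat n n" "transpose_mat A = - A" "x \<in> carrier_vec n"
  shows "a\<^sup>2 * sqnorm x \<le> sqnorm (pencil A a b x)"
  using sqnorm_pencil_skew[OF assms] sqnorm_nonneg[of "cmat A *\<^sub>v x"] by simp

lemma cmat_mult_vec_lincomb:
  assumes "A \<in> carrier_mat n n" "x \<in> carrier_vec n" "y \<in> carrier_vec n"
  shows "cmat A *\<^sub>v (c \<cdot>\<^sub>v x + d \<cdot>\<^sub>v y) = c \<cdot>\<^sub>v (cmat A *\<^sub>v x) + d \<cdot>\<^sub>v (cmat A *\<^sub>v y)"
  using assms by (simp add: mult_add_distrib_mat_vec[of _ n n] mult_mat_vec[of _ n n])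

lemma pencil_smult:
  "A \<in> carrier_mat n n \<Longrightarrow> x \<in> carrier_vec n \<Longrightarrow> pencil A a b (c \<cdot>\<^sub>v x) = c \<cdot>\<^sub>v pencil A a b x"
  by (intro eq_vecI) (auto simp: pencil_def mult_mat_vec[of _ n n] algebra_simps)

lemma pencil_commute:
  assumes A: "A \<in> carrier_mat n n" and x: "x \<in> carrier_vec n"
  shows "pencil A a b (pencil A c d x) = pencil A c d (pencil A a b x)"
proof -
  have "cmat A *\<^sub>v pencil A c d x = of_real c \<cdot>\<^sub>v (cmat A *\<^sub>v x) + of_real d \<cdot>\<^sub>v (cmat A *\<^sub>v (cmat A *\<^sub>v x))"
    "cmat A *\<^sub>v pencil A a b x = of_real a \<cdot>\<^sub>v (cmat A *\<^sub>v x) + of_real b \<cdot>\<^sub>v (cmat A *\<^sub>v (cmat A *\<^sub>v x))"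
    using A x by (auto simp: pencil_def cmat_mult_vec_lincomb[of _ n])
  then show ?thesis
    using A x by (intro eq_vecI) (auto simp: pencil_def algebra_simps)
qed

lemma mat_inverse_exists_if_kernel_trivial:
  assumes A: "(A :: 'a :: field mat) \<in> carrier_mat n n"
    and ker: "\<And>v. v \<in> carrier_vec n \<Longrightarrow> A *\<^sub>v v = 0\<^sub>v n \<Longrightarrow> v = 0\<^sub>v n"
  obtains B where "B \<in> carrier_mat n n" "A * B = 1\<^sub>m n" "B * A = 1\<^sub>m n"
proof -
  have "Determinant.det A \<noteq> 0" using det_0_iff_vec_prod_zero[OF A] ker by blast
  from det_non_zero_imp_unit[OF A this, of "()"] that show ?thesis
    unfolding Units_def ring_mat_def by auto
qed

lemma pencil_skew_invertible:
  assumes A: "A \<in> carrier_mat n n" "transpose_mat A = - A" and a: "a \<noteq> 0"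
  obtains C where "C \<in> carrier_mat n n"
    "\<And>x. x \<in> carrier_vec n \<Longrightarrow> C *\<^sub>v pencil A a b x = x"
    "\<And>y. y \<in> carrier_vec n \<Longrightarrow> pencil A a b (C *\<^sub>v y) = y"
proof -
  define P where "P = cmat (a \<cdot>\<^sub>m 1\<^sub>m n + b \<cdot>\<^sub>m A)"
  have P: "P \<in> carrier_mat n n" using A by (simp add: P_def)
  have act: "P *\<^sub>v x = pencil A a b x" if "x \<in> carrier_vec n" for x
    unfolding P_def using cmat_mult_vec_pencil[OF A(1) that] .
  have "x = 0\<^sub>v n" if x: "x \<in> carrier_vec n" and "P *\<^sub>v x = 0\<^sub>v n" for x
  proof -
    have "sqnorm (pencil A a b x) = 0"
      using that act[OF x] sqnorm_eq_0_iff[of "0\<^sub>v n" n] by simp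
    then have "a\<^sup>2 * sqnorm x \<le> 0" using sqnorm_pencil_skew_ge[OF A x, of a b] by simp
    then have "sqnorm x = 0" using a sqnorm_nonneg[of x] by (simp add: mult_le_0_iff)
    then show ?thesis using sqnorm_eq_0_iff[OF x] by simp
  qed
  then obtain C where C: "C \<in> carrier_mat n n" "P * C = 1\<^sub>m n" "C * P = 1\<^sub>m n"
    using mat_inverse_exists_if_kernel_trivial[OF P] by blast
  show ?thesis
  proof (rule that[OF C(1)])
    fix x :: "complex Matrix.vec" assume x: "x \<in> carrier_vec n"
    show "C *\<^sub>v pencil A a b x = x"
      using assoc_mult_mat_vec[OF C(1) P x] C(3) x by (simp add: act[OF x])
  next
    fix y :: "complex Matrix.vec" assume y: "y \<in> carrier_vec n"
    show "pencil A a b (C *\<^sub>v y) = y"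
      using assoc_mult_mat_vec[OF P C(1) y] C y act[of "C *\<^sub>v y"] by simp
  qed
qed

lemma pencil_skew_commuting_preimage:
  assumes A: "A \<in> carrier_mat n n" "transpose_mat A = - A" and \<alpha>: "\<alpha> \<noteq> 0"
    and ab: "a \<in> carrier_vec n" "b \<in> carrier_vec n"
    and eq: "pencil A \<gamma> \<delta> a = \<mu> \<cdot>\<^sub>v pencil A \<alpha> \<beta> b"
  obtains c where "c \<in> carrier_vec n" "pencil A \<alpha> \<beta> c = a" "pencil A \<gamma> \<delta> c = \<mu> \<cdot>\<^sub>v b"
proof -
  obtain C where C: "C \<in> carrier_mat n n"
    and C_left: "\<And>x. x \<in> carrier_vec n \<Longrightarrow> C *\<^sub>v pencil A \<alpha> \<beta> x = x"
    and C_right: "\<And>y. y \<in> carrier_vec n \<Longrightarrow> pencil A \<alpha> \<beta> (C *\<^sub>v y) = y"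
    using pencil_skew_invertible[OF A \<alpha>] by blast
  define c where "c = C *\<^sub>v a"
  have c: "c \<in> carrier_vec n" using C ab by (simp add: c_def)
  have Qc: "pencil A \<alpha> \<beta> c = a" using C_right[OF ab(1)] by (simp add: c_def)
  have "pencil A \<alpha> \<beta> (pencil A \<gamma> \<delta> c) = pencil A \<alpha> \<beta> (\<mu> \<cdot>\<^sub>v b)"
    using pencil_commute[OF A(1) c, of \<alpha> \<beta> \<gamma> \<delta>] eq Qc pencil_smult[OF A(1) ab(2)] by simp
  then have "pencil A \<gamma> \<delta> c = \<mu> \<cdot>\<^sub>v b"
    using arg_cong[of _ _ "(*\<^sub>v) C"] C_left A c ab by (metis pencil_carrier smult_carrier_vec)
  with c Qc that show ?thesis by blast
qed

lemma pencil_pencil_skew_eq_0_imp: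
  assumes A: "A \<in> carrier_mat n n" "transpose_mat A = - A"
    and B: "B \<in> carrier_mat n n" "transpose_mat B = - B"
    and ac: "a \<noteq> 0" "c \<noteq> 0" and x: "x \<in> carrier_vec n"
    and zero: "pencil A a b (pencil B c d x) = 0\<^sub>v n"
  shows "x = 0\<^sub>v n"
proof -
  have "a\<^sup>2 * (c\<^sup>2 * sqnorm x) \<le> a\<^sup>2 * sqnorm (pencil B c d x)"
    using sqnorm_pencil_skew_ge[OF B x] by (intro mult_left_mono) auto
  also have "\<dots> \<le> sqnorm (pencil A a b (pencil B c d x))"
    by (rule sqnorm_pencil_skew_ge[OF A]) (use B x in simp)
  also have "\<dots> = 0" using zero sqnorm_eq_0_iff[of "0\<^sub>v n" n] by simp
  finally have "sqnorm x = 0"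
    using ac sqnorm_nonneg[of x] by (simp add: mult_le_0_iff zero_less_mult_iff)
  then show ?thesis using sqnorm_eq_0_iff[OF x] by simp
qed

lemma frac_add_le_frac_add:
  fixes \<alpha> \<beta> n s t :: real
  assumes "\<alpha> \<le> \<beta>" "0 \<le> s" "s \<le> t * n" "\<beta> * n + s > 0" "\<beta> + t > 0"
  shows "(\<alpha> * n + s) / (\<beta> * n + s) \<le> (\<alpha> + t) / (\<beta> + t)"
proof -
  have "(\<alpha> * n + s) * (\<beta> + t) \<le> (\<alpha> + t) * (\<beta> * n + s)"
  proof -
    have "(\<beta> - \<alpha>) * s \<le> (\<beta> - \<alpha>) * (t * n)" using assms by (intro mult_left_mono) auto
    then show ?thesis by (simp add: algebra_simps)
  qed
  then show ?thesis using assms by (simp add: divide_le_eq le_divide_eq mult.commute)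
qed

lemma splitting_eigen_equation:
  fixes A B :: "real mat" and v :: "complex Matrix.vec" and \<eta> :: complex
  assumes A: "A \<in> carrier_mat n n" and B: "B \<in> carrier_mat n n" and \<omega>: "\<omega> \<noteq> 0"
    and v: "v \<in> carrier_vec n"
    and eig: "v + cmat A *\<^sub>v v + cmat B *\<^sub>v v
      = \<eta> \<cdot>\<^sub>v (of_real (1 / (2 * \<omega>)) \<cdot>\<^sub>v pencil A (\<omega> + 1) 1 (pencil B \<omega> 1 v))"
  shows "pencil A (\<omega> - 1) (-1) (pencil B \<omega> (-1) v) = (1 - \<eta>) \<cdot>\<^sub>v pencil A (\<omega> + 1) 1 (pencil B \<omega> 1 v)"
proof (rule eq_vecI)
  define Av Bv ABv where "Av = cmat A *\<^sub>v v" and "Bv = cmat B *\<^sub>v v" and "ABv = cmat A *\<^sub>v Bv"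
  have expand: "pencil A \<alpha> \<beta> (pencil B \<omega> s v) $ i
      = \<alpha> * (\<omega> * v $ i + s * Bv $ i) + \<beta> * (\<omega> * Av $ i + s * ABv $ i)" if "i < n" for \<alpha> \<beta> s i
    using A B v that by (simp add: pencil_def cmat_mult_vec_lincomb[of _ n] Av_def Bv_def ABv_def)
  fix i assume "i < dim_vec ((1 - \<eta>) \<cdot>\<^sub>v pencil A (\<omega> + 1) 1 (pencil B \<omega> 1 v))"
  then have i: "i < n" using A by simp
  have "v $ i + Av $ i + Bv $ i = \<eta> * (1 / (2 * \<omega>) * ((\<omega> + 1) * (\<omega> * v $ i + Bv $ i) + (\<omega> * Av $ i + ABv $ i)))"
    using arg_cong[OF eig, of "\<lambda>x. x $ i"] A B v i expand[OF i, of "\<omega> + 1" 1 1]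
    by (simp add: Av_def Bv_def add.assoc)
  then show "pencil A (\<omega> - 1) (-1) (pencil B \<omega> (-1) v) $ i
      = ((1 - \<eta>) \<cdot>\<^sub>v pencil A (\<omega> + 1) 1 (pencil B \<omega> 1 v)) $ i"
    using \<omega> A i by (simp add: expand field_simps)
qed (use A in simp)

lemma skew_splitting_eigenvalue_bound:
  fixes A B :: "real mat" and v :: "complex Matrix.vec" and \<eta> :: complex
  assumes A: "A \<in> carrier_mat n n" "transpose_mat A = - A"
    and B: "B \<in> carrier_mat n n" "transpose_mat B = - B"
    and bound: "\<And>x. x \<in> carrier_vec n \<Longrightarrow> sqnorm (cmat A *\<^sub>v x) \<le> \<rho>\<^sup>2 * sqnorm x"
    and \<omega>: "\<omega> > 0" and v: "v \<in> carrier_vec n" "v \<noteq> 0\<^sub>v n"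
    and eig: "v + cmat A *\<^sub>v v + cmat B *\<^sub>v v
      = \<eta> \<cdot>\<^sub>v (of_real (1 / (2 * \<omega>)) \<cdot>\<^sub>v pencil A (\<omega> + 1) 1 (pencil B \<omega> 1 v))"
  shows "(cmod (\<eta> - 1))\<^sup>2 \<le> ((\<omega> - 1)\<^sup>2 + \<rho>\<^sup>2) / ((\<omega> + 1)\<^sup>2 + \<rho>\<^sup>2)"
proof -
  define a where "a = pencil B \<omega> (-1) v"
  define b where "b = pencil B \<omega> 1 v"
  have ab: "a \<in> carrier_vec n" "b \<in> carrier_vec n" using B v by (auto simp: a_def b_def)
  have split: "pencil A (\<omega> - 1) (-1) a = (1 - \<eta>) \<cdot>\<^sub>v pencil A (\<omega> + 1) 1 b"
    using splitting_eigen_equation[OF A(1) B(1) _ v(1) eig] \<omega> by (simp add: a_def b_def)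
  have "\<omega> + 1 \<noteq> 0" using \<omega> by simp
  then obtain c where c: "c \<in> carrier_vec n"
    and Qc: "pencil A (\<omega> + 1) 1 c = a" and Pc: "pencil A (\<omega> - 1) (-1) c = (1 - \<eta>) \<cdot>\<^sub>v b"
    using pencil_skew_commuting_preimage[OF A _ ab split] by blast
  define s where "s = sqnorm (cmat A *\<^sub>v c)"
  have "sqnorm a = sqnorm b"
    using sqnorm_pencil_skew[OF B v(1)] by (simp add: a_def b_def)
  then have nb: "sqnorm b = (\<omega> + 1)\<^sup>2 * sqnorm c + s"
    using sqnorm_pencil_skew[OF A c, of "\<omega> + 1" 1] Qc by (simp add: s_def)
  have n\<eta>: "(cmod (1 - \<eta>))\<^sup>2 * sqnorm b = (\<omega> - 1)\<^sup>2 * sqnorm c + s"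
    using sqnorm_pencil_skew[OF A c, of "\<omega> - 1" "-1"] Pc by (simp add: sqnorm_smult s_def)
  have "0 < \<omega>\<^sup>2 * sqnorm v" using \<omega> v sqnorm_eq_0_iff[OF v(1)] sqnorm_nonneg[of v] by simp
  also have "\<dots> \<le> sqnorm b" using sqnorm_pencil_skew_ge[OF B v(1)] by (simp add: b_def)
  finally have "(cmod (1 - \<eta>))\<^sup>2 = ((\<omega> - 1)\<^sup>2 * sqnorm c + s) / ((\<omega> + 1)\<^sup>2 * sqnorm c + s)"
    using nb n\<eta> by (simp add: eq_divide_eq)
  also have "\<dots> \<le> ((\<omega> - 1)\<^sup>2 + \<rho>\<^sup>2) / ((\<omega> + 1)\<^sup>2 + \<rho>\<^sup>2)"
    using bound[OF c] nb n\<eta> \<omega> \<open>0 < \<omega>\<^sup>2 * sqnorm v\<close> \<open>\<omega>\<^sup>2 * sqnorm v \<le> sqnorm b\<close>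
    by (intro frac_add_le_frac_add) (auto simp: s_def sqnorm_nonneg power2_eq_square algebra_simps add_pos_nonneg)
  finally show ?thesis by (simp add: norm_minus_commute)
qed

section \<open>The NASS preconditioner\<close>

lemma mat_inv_right_inverse:
  assumes A: "A \<in> carrier_mat n n"
    and ker: "\<And>v. v \<in> carrier_vec n \<Longrightarrow> A *\<^sub>v v = 0\<^sub>v n \<Longrightarrow> v = 0\<^sub>v n"
  shows "mat_inv n A \<in> carrier_mat n n" "A * mat_inv n A = 1\<^sub>m n"
proof -
  have "\<exists>B. B \<in> carrier_mat n n \<and> A * B = 1\<^sub>m n \<and> B * A = 1\<^sub>m n"
    using mat_inverse_exists_if_kernel_trivial[OF A ker] by blast
  then have "mat_inv n A \<in> carrier_mat n n \<and> A * mat_inv n A = 1\<^sub>m n \<and> mat_inv n A * A = 1\<^sub>m n"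
    unfolding mat_inv_def by (rule someI_ex)
  then show "mat_inv n A \<in> carrier_mat n n" "A * mat_inv n A = 1\<^sub>m n" by auto
qed

lemma eigenvector_of_right_inverse_mult:
  fixes F G R :: "real mat"
  assumes F: "F \<in> carrier_mat n n" and G: "G \<in> carrier_mat n n" and R: "R \<in> carrier_mat n n"
    and FG: "F * G = 1\<^sub>m n" and eig: "eigenvalue (cmat (G * R)) \<eta>"
  obtains v where "v \<in> carrier_vec n" "v \<noteq> 0\<^sub>v n" "cmat R *\<^sub>v v = \<eta> \<cdot>\<^sub>v (cmat F *\<^sub>v v)"
proof -
  obtain v where v: "v \<in> carrier_vec n" "v \<noteq> 0\<^sub>v n" and ev: "cmat (G * R) *\<^sub>v v = \<eta> \<cdot>\<^sub>v v"
    using eig G unfolding eigenvalue_def eigenvector_def by auto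
  have GR: "G * R \<in> carrier_mat n n" using G R by simp
  have "F * (G * R) = R" using assoc_mult_mat[OF F G R] FG R by simp
  then have "cmat R *\<^sub>v v = (cmat F * cmat (G * R)) *\<^sub>v v"
    using of_real_hom.mat_hom_mult[OF F GR] by metis
  also have "\<dots> = cmat F *\<^sub>v (cmat (G * R) *\<^sub>v v)" using F GR v by simp
  also have "\<dots> = \<eta> \<cdot>\<^sub>v (cmat F *\<^sub>v v)" using F v by (simp add: ev mult_mat_vec[of _ n n])
  finally show ?thesis using that v by blast
qed

lemma spectrum_real_finite: "T \<in> carrier_mat n n \<Longrightarrow> finite (spectrum_real T)"
  using eigenvalue_root_char_poly[of T n] degree_monic_char_poly[of T n]
  by (auto simp: spectrum_real_def intro: poly_roots_finite)

lemma sigma_bounds: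
  assumes T: "T \<in> carrier_mat n n" and l: "l \<in> spectrum_real T" and \<omega>: "\<omega> > 0"
  shows "sqrt (((\<omega> - 1)\<^sup>2 + l\<^sup>2) / ((\<omega> + 1)\<^sup>2 + l\<^sup>2)) \<le> sigma T \<omega>" and "sigma T \<omega> < 1"
proof -
  define f where "f l = sqrt (((\<omega> - 1)\<^sup>2 + l\<^sup>2) / ((\<omega> + 1)\<^sup>2 + l\<^sup>2))" for l :: real
  have sigma: "sigma T \<omega> = Max (f ` spectrum_real T)" by (simp add: sigma_def f_def)
  have fin: "finite (f ` spectrum_real T)" using spectrum_real_finite[OF T] by simp
  show "f l \<le> sigma T \<omega>" unfolding sigma using fin l by (intro Max_ge) auto
  have "f l' < 1" for l'
  proof -
    have "(\<omega> - 1)\<^sup>2 < (\<omega> + 1)\<^sup>2" using \<omega> by (simp add: power2_eq_square algebra_simps)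
    moreover have "(\<omega> + 1)\<^sup>2 + l'\<^sup>2 > 0" using \<omega> by (simp add: add_pos_nonneg)
    ultimately show ?thesis by (simp add: f_def)
  qed
  moreover have "sigma T \<omega> \<in> f ` spectrum_real T" unfolding sigma using fin l by (intro Max_in) auto
  ultimately show "sigma T \<omega> < 1" by auto
qed

definition blkS :: "nat \<Rightarrow> real mat \<Rightarrow> real mat" where
  "blkS M T = four_block_mat (0\<^sub>m M M) T (- T) (0\<^sub>m M M)"

lemma blkS_carrier: "T \<in> carrier_mat M M \<Longrightarrow> blkS M T \<in> carrier_mat (M + M) (M + M)"
  by (simp add: blkS_def)

lemma blkD_carrier: "D \<in> carrier_mat M M \<Longrightarrow> blkD M D \<in> carrier_mat (M + M) (M + M)"
  by (simp add: blkD_def)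

lemma transpose_blkS: "T \<in> carrier_mat M M \<Longrightarrow> transpose_mat T = T \<Longrightarrow> transpose_mat (blkS M T) = - blkS M T"
  unfolding blkS_def by (rule transpose_skew_block_mat)

lemma transpose_blkD:
  assumes D: "D \<in> carrier_mat M M" "diagonal_mat D"
  shows "transpose_mat (blkD M D) = - blkD M D"
proof -
  have "D $$ (i, j) = D $$ (j, i)" if "i < M" "j < M" for i j
    using D that by (cases "i = j") (auto simp: diagonal_mat_def)
  then have "transpose_mat (- D) = - D" using D by (intro eq_matI) auto
  then show ?thesis
    using transpose_skew_block_mat[of "- D" M] D by (simp add: blkD_def)
qed

lemma NASS_carrier:
  assumes "T \<in> carrier_mat M M" "D \<in> carrier_mat M M"
  shows "NASS M T D \<omega> \<in> carrier_mat (M + M) (M + M)"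
proof -
  have "blkT M T \<in> carrier_mat (M + M) (M + M)" "blkD M D \<in> carrier_mat (M + M) (M + M)"
    using assms by (simp_all add: blkT_def blkD_def)
  then show ?thesis unfolding NASS_def mult_2[of M]
    by (intro smult_carrier_mat mult_carrier_mat add_carrier_mat) auto
qed

lemma cmat_smult_mult_vec:
  "X \<in> carrier_mat n m \<Longrightarrow> x \<in> carrier_vec m \<Longrightarrow> cmat (c \<cdot>\<^sub>m X) *\<^sub>v x = of_real c \<cdot>\<^sub>v (cmat X *\<^sub>v x)"
  by (intro eq_vecI) (auto simp: scalar_prod_def sum_distrib_left mult.assoc)

lemma cmat_NASS_mult_vec:
  assumes T: "T \<in> carrier_mat M M" and D: "D \<in> carrier_mat M M" and x: "x \<in> carrier_vec (M + M)"
  shows "cmat (NASS M T D \<omega>) *\<^sub>v x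
    = of_real (1 / (2 * \<omega>)) \<cdot>\<^sub>v pencil (blkS M T) (\<omega> + 1) 1 (pencil (blkD M D) \<omega> 1 x)"
proof -
  define Q where "Q = (\<omega> + 1) \<cdot>\<^sub>m 1\<^sub>m (M + M) + 1 \<cdot>\<^sub>m blkS M T"
  define P where "P = \<omega> \<cdot>\<^sub>m 1\<^sub>m (M + M) + 1 \<cdot>\<^sub>m blkD M D"
  have QP: "Q \<in> carrier_mat (M + M) (M + M)" "P \<in> carrier_mat (M + M) (M + M)"
    using T D by (auto simp: Q_def P_def blkS_def blkD_def)
  have "\<omega> \<cdot>\<^sub>m 1\<^sub>m (2 * M) + blkT M T = Q"
    using T by (intro eq_matI) (auto simp: Q_def blkT_def blkS_def)
  moreover have "\<omega> \<cdot>\<^sub>m 1\<^sub>m (2 * M) + blkD M D = P"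
    using D by (intro eq_matI) (auto simp: P_def blkD_def)
  ultimately have "NASS M T D \<omega> = (1 / (2 * \<omega>)) \<cdot>\<^sub>m (Q * P)" by (simp add: NASS_def)
  then have "cmat (NASS M T D \<omega>) *\<^sub>v x = of_real (1 / (2 * \<omega>)) \<cdot>\<^sub>v (cmat Q *\<^sub>v (cmat P *\<^sub>v x))"
    using QP x by (simp add: cmat_smult_mult_vec[of _ "M + M" "M + M"] of_real_hom.mat_hom_mult[of _ "M + M" "M + M"])
  then show ?thesis
    using T D x by (simp add: Q_def P_def cmat_mult_vec_pencil blkS_carrier blkD_carrier)
qed

lemma cmat_blkR_mult_vec:
  assumes T: "T \<in> carrier_mat M M" and D: "D \<in> carrier_mat M M" and x: "x \<in> carrier_vec (M + M)"
  shows "cmat (blkR M T D) *\<^sub>v x = x + cmat (blkS M T) *\<^sub>v x + cmat (blkD M D) *\<^sub>v x"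
proof -
  have "cmat (blkR M T D) = 1\<^sub>m (M + M) + cmat (blkS M T) + cmat (blkD M D)"
    using T D by (intro eq_matI) (auto simp: blkR_def blkS_def blkD_def)
  then show ?thesis
    using T D x blkS_carrier[OF T] blkD_carrier[OF D]
    by (simp add: add_mult_distrib_mat_vec[of _ "M + M" "M + M"])
qed

lemma NASS_kernel_trivial:
  assumes T: "T \<in> carrier_mat M M" "transpose_mat T = T"
    and D: "D \<in> carrier_mat M M" "diagonal_mat D" and \<omega>: "\<omega> > 0"
    and x: "x \<in> carrier_vec (M + M)" and zero: "NASS M T D \<omega> *\<^sub>v x = 0\<^sub>v (M + M)"
  shows "x = 0\<^sub>v (M + M)"
proof -
  define y where "y = map_vec complex_of_real x"
  have y: "y \<in> carrier_vec (M + M)" using x by (simp add: y_def)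
  have F: "NASS M T D \<omega> \<in> carrier_mat (M + M) (M + M)" using NASS_carrier[OF T(1) D(1)] .
  have "cmat (NASS M T D \<omega>) *\<^sub>v y = 0\<^sub>v (M + M)"
    using of_real_hom.mult_mat_vec_hom[OF F x] zero of_real_hom.vec_hom_zero by (metis y_def)
  define p where "p = pencil (blkS M T) (\<omega> + 1) 1 (pencil (blkD M D) \<omega> 1 y)"
  have p: "p \<in> carrier_vec (M + M)"
    using T(1) D(1) y by (simp add: p_def blkS_carrier blkD_carrier)
  have "of_real (1 / (2 * \<omega>)) \<cdot>\<^sub>v p = 0\<^sub>v (M + M)"
    using cmat_NASS_mult_vec[OF T(1) D(1) y] \<open>cmat (NASS M T D \<omega>) *\<^sub>v y = 0\<^sub>v (M + M)\<close>
    by (simp add: p_def)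
  then have "(1 / (2 * \<omega>))\<^sup>2 * sqnorm p = 0"
    using sqnorm_smult[of "of_real (1 / (2 * \<omega>))" p] sqnorm_eq_0_iff[of "0\<^sub>v (M + M)" "M + M"] by simp
  then have "p = 0\<^sub>v (M + M)" using \<omega> sqnorm_eq_0_iff[OF p] by simp
  then have "y = 0\<^sub>v (M + M)"
    using pencil_pencil_skew_eq_0_imp[OF blkS_carrier[OF T(1)] transpose_blkS[OF T]
        blkD_carrier[OF D(1)] transpose_blkD[OF D] _ _ y, of "\<omega> + 1" \<omega> 1 1] \<omega>
    by (simp add: p_def)
  then show ?thesis by (simp add: y_def)
qed

lemma NASS_eigen_equation:
  assumes T: "T \<in> carrier_mat M M" "transpose_mat T = T"
    and D: "D \<in> carrier_mat M M" "diagonal_mat D" and \<omega>: "\<omega> > 0"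
    and eig: "eigenvalue (cmat (mat_inv (2 * M) (NASS M T D \<omega>) * blkR M T D)) \<eta>"
  obtains v where "v \<in> carrier_vec (M + M)" "v \<noteq> 0\<^sub>v (M + M)"
    "v + cmat (blkS M T) *\<^sub>v v + cmat (blkD M D) *\<^sub>v v
      = \<eta> \<cdot>\<^sub>v (of_real (1 / (2 * \<omega>)) \<cdot>\<^sub>v pencil (blkS M T) (\<omega> + 1) 1 (pencil (blkD M D) \<omega> 1 v))"
proof -
  have F: "NASS M T D \<omega> \<in> carrier_mat (M + M) (M + M)" using NASS_carrier[OF T(1) D(1)] .
  have R: "blkR M T D \<in> carrier_mat (M + M) (M + M)" using T D by (simp add: blkR_def)
  define G where "G = mat_inv (M + M) (NASS M T D \<omega>)"
  have G: "G \<in> carrier_mat (M + M) (M + M)" "NASS M T D \<omega> * G = 1\<^sub>m (M + M)"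
    unfolding G_def using mat_inv_right_inverse[OF F NASS_kernel_trivial[OF T D \<omega>]] by blast+
  have "eigenvalue (cmat (G * blkR M T D)) \<eta>" using eig by (simp only: G_def mult_2[of M])
  then obtain v where v: "v \<in> carrier_vec (M + M)" "v \<noteq> 0\<^sub>v (M + M)"
    and "cmat (blkR M T D) *\<^sub>v v = \<eta> \<cdot>\<^sub>v (cmat (NASS M T D \<omega>) *\<^sub>v v)"
    using eigenvector_of_right_inverse_mult[OF F G(1) R G(2)] by blast
  with that show ?thesis
    using cmat_blkR_mult_vec[OF T(1) D(1) v(1)] cmat_NASS_mult_vec[OF T(1) D(1) v(1)] by simp
qed

theorem theorem4p1:
  fixes M :: nat and T D :: "real mat" and \<omega> :: real and \<eta> :: complex
  assumes "M \<ge> 1"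
    and "sym_pos_def_mat M T"
    and "D \<in> carrier_mat M M" and "diagonal_mat D" and "\<forall>i < M. D $$ (i, i) \<ge> 0"
    and "\<omega> > 0"
    and "eigenvalue (map_mat complex_of_real (mat_inv (2*M) (NASS M T D \<omega>) * blkR M T D)) \<eta>"
  shows "cmod (\<eta> - 1) \<le> sigma T \<omega> \<and> sigma T \<omega> < 1"
proof -
  note D = assms(3,4) and \<omega> = assms(6)
  have T: "T \<in> carrier_mat M M" "transpose_mat T = T"
    using assms(2) by (auto simp: sym_pos_def_mat_def)
  obtain l where l: "l \<in> spectrum_real T"
    and T_bound: "\<And>x. x \<in> carrier_vec M \<Longrightarrow> (T *\<^sub>v x) \<bullet> (T *\<^sub>v x) \<le> l\<^sup>2 * (x \<bullet> x)"
    using sym_mat_norm_bound_by_eigenvalue[OF T] assms(1) by (auto simp: spectrum_real_def)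
  have S_bound: "sqnorm (cmat (blkS M T) *\<^sub>v x) \<le> l\<^sup>2 * sqnorm x" if "x \<in> carrier_vec (M + M)" for x
    using sqnorm_skew_block_mult_vec_le[OF T(1) sqnorm_cmat_mult_vec_le[OF T(1) T_bound] that]
    by (simp add: blkS_def)
  obtain v where "v \<in> carrier_vec (M + M)" "v \<noteq> 0\<^sub>v (M + M)"
    "v + cmat (blkS M T) *\<^sub>v v + cmat (blkD M D) *\<^sub>v v
      = \<eta> \<cdot>\<^sub>v (of_real (1 / (2 * \<omega>)) \<cdot>\<^sub>v pencil (blkS M T) (\<omega> + 1) 1 (pencil (blkD M D) \<omega> 1 v))"
    using NASS_eigen_equation[OF T D \<omega> assms(7)] by blast
  then have "(cmod (\<eta> - 1))\<^sup>2 \<le> ((\<omega> - 1)\<^sup>2 + l\<^sup>2) / ((\<omega> + 1)\<^sup>2 + l\<^sup>2)"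
    using skew_splitting_eigenvalue_bound[OF blkS_carrier[OF T(1)] transpose_blkS[OF T]
          blkD_carrier[OF D(1)] transpose_blkD[OF D] S_bound \<omega>] by blast
  then have "cmod (\<eta> - 1) \<le> sqrt (((\<omega> - 1)\<^sup>2 + l\<^sup>2) / ((\<omega> + 1)\<^sup>2 + l\<^sup>2))"
    using real_le_rsqrt by blast
  then show ?thesis using sigma_bounds[OF T(1) l \<omega>] by linarith
qed

end
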